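(* Let $\epsilon>0$ be a constant and let $\alpha\in(1/2,1)$ be a constant. Let $\mathbf C,\mathbf B$ be independent, uniformly random $m\times n$ matrices over $\mathbb{Z}_2$ with $\alpha n\le m\le n$. Then for sufficiently large $n$ there exists a constant $\delta>0$ such that $\Pr[\operatorname{rank}(\mathbf C^\intercal\mathbf B+\mathbf B^\intercal\mathbf C)\le(1-\epsilon)n]\le2^{-\delta n^2}$. *)

theory Defs
  imports "HOL-Library.Z2" "Jordan_Normal_Form.DL_Rank"
begin

text \<open>Rank of a matrix over GF(2) (type bit), as column rank in the Jordan_Normal_Form library.
  The argument r is the number of rows.\<close>
definition rank2 :: "nat \<Rightarrow> bit mat \<Rightarrow> nat" where
  "rank2 r A = vec_space.rank r (A :: bit mat)"

definition prob_low_rank :: "nat \<Rightarrow> nat \<Rightarrow> real \<Rightarrow> real" where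
  "prob_low_rank m n t =
     real (card {(C, B). C \<in> carrier_mat m n \<and> B \<in> carrier_mat m n \<and>
                 real (rank2 n (transpose_mat C * B + transpose_mat B * C)) \<le> t})
     / real (card (carrier_mat m n :: bit mat set)) ^ 2"

end

theory Submission
  imports Defs "HOL-Library.Function_Algebras"
begin

text \<open>Stack each column of \<open>C\<close> on top of the same column of \<open>B\<close>. This gives vectors
  \<open>c\<^sub>1, \<dots>, c\<^sub>n\<close> in \<open>\<bbbF>\<^sub>2\<^sup>2\<^sup>m\<close>, and the \<open>(k, j)\<close> entry of \<open>C\<^sup>TB + B\<^sup>TC\<close> is \<open>\<omega>(c\<^sub>k, c\<^sub>j)\<close> for the
  standard symplectic form \<open>\<omega>\<close>. If the rank is at most \<open>n - d\<close>, an involutive column operation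
  \<open>P\<close>, chosen among at most \<open>4^n 2^((n-d)d)\<close> candidates, turns \<open>(C, B)\<close> into a pair whose
  stacked columns indexed by some \<open>d\<close>-set \<open>T\<close> are isotropic and orthogonal to all columns.
  For a tuple \<open>u\<close> the complement \<open>u\<^sup>\<perp>\<close> has at most \<open>2^(2m) |ker u| / 2^d\<close> elements, and adding
  isotropic vectors one at a time bounds \<open>\<Sum>\<^sub>u |ker u|^(n-d)\<close> by \<open>2^((2m+1)d - d(d-1)/2)\<close>
  as long as \<open>n + d \<le> 2m\<close>. Hence at most \<open>2^(2mn + 2n + 3d/2 - d\<^sup>2/2)\<close> of the \<open>2^(2mn)\<close>
  pairs have rank at most \<open>n - d\<close>, and \<open>d \<approx> \<epsilon>n\<close> gives the bound \<open>2^(-\<delta>n\<^sup>2)\<close>.\<close>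

(* Z2 rewrites + and * on bit to xor and and by default, which defeats ring normalisation. *)
declare add_bit_eq_xor [simp del] mult_bit_eq_and [simp del]

lemma bit_add_self [simp]: "(x::bit) + x = 0"
  by (cases x) simp_all

lemma bit_add_eq_0_iff: "(a::bit) + b = 0 \<longleftrightarrow> a = b"
  by (cases a; cases b) simp_all

lemma UNIV_bit: "(UNIV :: bit set) = {0, 1}"
  by (auto intro: bit.exhaust)

lemma finite_UNIV_bit [simp]: "finite (UNIV :: bit set)"
  unfolding UNIV_bit by simp

lemma card_UNIV_bit: "card (UNIV :: bit set) = 2"
  unfolding UNIV_bit by simp

lemma bit_vector_add_cancel [simp]: "(v::'i \<Rightarrow> bit) + (v + w) = w"
  by (simp add: fun_eq_iff add.assoc[symmetric])

definition supported_on :: "'i set \<Rightarrow> ('i \<Rightarrow> bit) set" where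
  "supported_on T = {x. \<forall>i. i \<notin> T \<longrightarrow> x i = 0}"

definition bit_subspace :: "('i \<Rightarrow> bit) set \<Rightarrow> bool" where
  "bit_subspace U \<longleftrightarrow> 0 \<in> U \<and> (\<forall>u\<in>U. \<forall>v\<in>U. u + v \<in> U)"

lemma bit_subspace_supported_on: "bit_subspace (supported_on T)"
  unfolding bit_subspace_def supported_on_def by simp

lemma bij_betw_restrict_supported_on:
  "bij_betw (\<lambda>x. restrict x T) (supported_on T) (T \<rightarrow>\<^sub>E (UNIV :: bit set))"
proof (rule bij_betw_byWitness[where f' = "\<lambda>f i. if i \<in> T then f i else 0"])
  show "\<forall>x\<in>supported_on T. (\<lambda>i. if i \<in> T then restrict x T i else 0) = x"
    unfolding supported_on_def by (auto simp: fun_eq_iff)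
qed (auto simp: supported_on_def PiE_def extensional_def fun_eq_iff)

lemma finite_supported_on [simp]: "finite T \<Longrightarrow> finite (supported_on T)"
  using bij_betw_finite[OF bij_betw_restrict_supported_on[of T]] by (simp add: finite_PiE)

lemma card_supported_on: "finite T \<Longrightarrow> card (supported_on T) = 2 ^ card T"
  using bij_betw_same_card[OF bij_betw_restrict_supported_on[of T]] by (simp add: card_PiE card_UNIV_bit)

lemma bij_betw_add_bit_subspace:
  assumes "bit_subspace U" and "a \<in> U"
  shows "bij_betw ((+) a) U U"
  by (rule bij_betw_byWitness[where f' = "(+) a"]) (use assms in \<open>auto simp: bit_subspace_def\<close>)

section \<open>The symplectic form on \<open>\<bbbF>\<^sub>2\<^sup>2\<^sup>m\<close>\<close>

definition symp_form :: "nat \<Rightarrow> (nat \<Rightarrow> bit) \<Rightarrow> (nat \<Rightarrow> bit) \<Rightarrow> bit" where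
  "symp_form m v w = (\<Sum>l<m. v l * w (m + l) + v (m + l) * w l)"

abbreviation symp_space :: "nat \<Rightarrow> (nat \<Rightarrow> bit) set" where
  "symp_space m \<equiv> supported_on {..<2 * m}"

lemma symp_form_commute: "symp_form m v w = symp_form m w v"
  unfolding symp_form_def by (intro sum.cong refl) (simp add: mult.commute add.commute)

lemma symp_form_self [simp]: "symp_form m v v = 0"
  unfolding symp_form_def by (simp add: mult.commute)

lemma symp_form_zero_left [simp]: "symp_form m 0 w = 0"
  by (simp add: symp_form_def)

lemma symp_form_add_left: "symp_form m (v + v') w = symp_form m v w + symp_form m v' w"
  unfolding symp_form_def by (simp add: algebra_simps sum.distrib)

lemma symp_form_add_right: "symp_form m w (v + v') = symp_form m w v + symp_form m w v'"
  using symp_form_add_left[of m v v' w] by (simp only: symp_form_commute)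

lemma symp_form_sum_left:
  "symp_form m (\<lambda>l. \<Sum>i\<in>T. x i * u i l) w = (\<Sum>i\<in>T. x i * symp_form m (u i) w)"
proof -
  have "symp_form m (\<lambda>l. \<Sum>i\<in>T. x i * u i l) w =
      (\<Sum>l<m. \<Sum>i\<in>T. x i * (u i l * w (m + l) + u i (m + l) * w l))"
    unfolding symp_form_def
    by (intro sum.cong refl) (simp only: sum_distrib_right distrib_left sum.distrib mult.assoc)
  also have "\<dots> = (\<Sum>i\<in>T. x i * symp_form m (u i) w)"
    unfolding symp_form_def by (subst sum.swap) (simp only: sum_distrib_left)
  finally show ?thesis .
qed

lemma symp_form_nondegenerate:
  assumes "v \<in> symp_space m" and "v \<noteq> 0"
  shows "\<exists>w\<in>symp_space m. symp_form m v w = 1"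
proof -
  obtain i where i: "v i = 1"
    using assms(2) by (auto simp: fun_eq_iff)
  then have "i < 2 * m"
    using assms(1) by (auto simp: supported_on_def not_less[symmetric])
  show ?thesis
  proof (cases "i < m")
    case True
    define w where "w = (\<lambda>k. if k = m + i then 1 else (0::bit))"
    have "symp_form m v w = v i"
      unfolding symp_form_def w_def using True
      by (simp add: if_distrib[of "\<lambda>y. v _ * y"] sum.delta cong: if_cong)
    moreover have "w \<in> symp_space m"
      unfolding supported_on_def w_def using True by auto
    ultimately show ?thesis
      using i by auto
  next
    case False
    define w where "w = (\<lambda>k. if k = i - m then 1 else (0::bit))"
    have "symp_form m v w = (\<Sum>l<m. if l = i - m then v (m + l) else 0)"
      unfolding symp_form_def w_def using False \<open>i < 2 * m\<close> by (intro sum.cong) auto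
    also have "\<dots> = v i"
      using False \<open>i < 2 * m\<close> by (simp add: sum.delta)
    finally have "symp_form m v w = v i" .
    moreover have "w \<in> symp_space m"
      unfolding supported_on_def w_def using False \<open>i < 2 * m\<close> by auto
    ultimately show ?thesis
      using i by auto
  qed
qed

definition bit_sign :: "bit \<Rightarrow> int" where
  "bit_sign b = (if b = 0 then 1 else -1)"

lemma bit_sign_add_one [simp]: "bit_sign (b + 1) = - bit_sign b"
  by (cases b) (simp_all add: bit_sign_def)

lemma sum_bit_sign_eq_0:
  assumes "finite A" and "bij_betw g A A" and "\<And>x. x \<in> A \<Longrightarrow> f (g x) = f x + 1"
  shows "(\<Sum>x\<in>A. bit_sign (f x)) = 0"
proof -
  have "(\<Sum>x\<in>A. bit_sign (f x)) = (\<Sum>x\<in>A. bit_sign (f (g x)))"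
    using sum.reindex_bij_betw[OF assms(2), of "\<lambda>x. bit_sign (f x)"] by simp
  also have "\<dots> = - (\<Sum>x\<in>A. bit_sign (f x))"
    using assms(3) by (simp add: sum_negf)
  finally show ?thesis
    by simp
qed

definition symp_orth :: "nat \<Rightarrow> (nat \<Rightarrow> bit) set \<Rightarrow> (nat \<Rightarrow> bit) set" where
  "symp_orth m U = {w \<in> symp_space m. \<forall>u\<in>U. symp_form m u w = 0}"

lemma finite_symp_orth [simp]: "finite (symp_orth m U)"
  by (simp add: symp_orth_def)

lemma sum_bit_sign_symp_form_subspace:
  assumes "bit_subspace U" and "finite U" and "w \<in> symp_space m"
  shows "(\<Sum>u\<in>U. bit_sign (symp_form m u w)) = (if w \<in> symp_orth m U then int (card U) else 0)"
proof (cases "w \<in> symp_orth m U")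
  case True
  then show ?thesis
    by (simp add: symp_orth_def bit_sign_def)
next
  case False
  then obtain a where "a \<in> U" and "symp_form m a w = 1"
    using assms(3) unfolding symp_orth_def by auto
  then have "(\<Sum>u\<in>U. bit_sign (symp_form m u w)) = 0"
    by (intro sum_bit_sign_eq_0[OF assms(2) bij_betw_add_bit_subspace[OF assms(1)]])
       (simp_all add: symp_form_add_left add.commute)
  then show ?thesis
    using False by simp
qed

lemma sum_bit_sign_symp_form_space:
  assumes "u \<in> symp_space m"
  shows "(\<Sum>w\<in>symp_space m. bit_sign (symp_form m u w)) = (if u = 0 then 2 ^ (2 * m) else 0)"
proof (cases "u = 0")
  case True
  then show ?thesis
    by (simp add: bit_sign_def card_supported_on)
next
  case False
  then obtain a where "a \<in> symp_space m" and "symp_form m u a = 1"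
    using symp_form_nondegenerate assms by blast
  then have "(\<Sum>w\<in>symp_space m. bit_sign (symp_form m u w)) = 0"
    by (intro sum_bit_sign_eq_0[OF _ bij_betw_add_bit_subspace[OF bit_subspace_supported_on]])
       (simp_all add: symp_form_add_right add.commute)
  then show ?thesis
    using False by simp
qed

text \<open>Double counting of the character sum
  \<open>\<Sum>u\<in>U. \<Sum>w\<in>V. (-1)^\<omega>(u,w)\<close>, summing first over \<open>U\<close> or first over \<open>V\<close>.\<close>
lemma card_mult_card_symp_orth:
  assumes "bit_subspace U" and "U \<subseteq> symp_space m"
  shows "card U * card (symp_orth m U) = 2 ^ (2 * m)"
proof -
  let ?V = "symp_space m"
  have fin: "finite U"
    using assms(2) by (rule finite_subset) simp
  have "{w \<in> ?V. w \<in> symp_orth m U} = symp_orth m U"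
    unfolding symp_orth_def by blast
  then have "int (card U * card (symp_orth m U)) =
      (\<Sum>w\<in>?V. if w \<in> symp_orth m U then int (card U) else 0)"
    by (simp add: sum.inter_filter[symmetric])
  also have "\<dots> = (\<Sum>w\<in>?V. \<Sum>u\<in>U. bit_sign (symp_form m u w))"
    using sum_bit_sign_symp_form_subspace[OF assms(1) fin] by simp
  also have "\<dots> = (\<Sum>u\<in>U. \<Sum>w\<in>?V. bit_sign (symp_form m u w))"
    by (rule sum.swap)
  also have "\<dots> = (\<Sum>u\<in>U. if u = 0 then 2 ^ (2 * m) else 0)"
    using assms(2) sum_bit_sign_symp_form_space by (intro sum.cong refl) blast
  also have "\<dots> = 2 ^ (2 * m)"
    using assms(1) fin by (simp add: sum.delta bit_subspace_def)
  finally have "int (card U * card (symp_orth m U)) = int (2 ^ (2 * m))"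
    by simp
  then show ?thesis
    by (simp only: of_nat_eq_iff)
qed

section \<open>Spans and kernels of tuples of vectors\<close>

definition lin_comb :: "'i set \<Rightarrow> ('i \<Rightarrow> nat \<Rightarrow> bit) \<Rightarrow> ('i \<Rightarrow> bit) \<Rightarrow> nat \<Rightarrow> bit" where
  "lin_comb T u x = (\<lambda>l. \<Sum>i\<in>T. x i * u i l)"

definition span_on :: "'i set \<Rightarrow> ('i \<Rightarrow> nat \<Rightarrow> bit) \<Rightarrow> (nat \<Rightarrow> bit) set" where
  "span_on T u = lin_comb T u ` supported_on T"

definition kernel_on :: "'i set \<Rightarrow> ('i \<Rightarrow> nat \<Rightarrow> bit) \<Rightarrow> ('i \<Rightarrow> bit) set" where
  "kernel_on T u = {x \<in> supported_on T. lin_comb T u x = 0}"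

lemma lin_comb_add: "lin_comb T u (x + y) = lin_comb T u x + lin_comb T u y"
  by (simp add: lin_comb_def fun_eq_iff distrib_right sum.distrib)

lemma lin_comb_zero [simp]: "lin_comb T u 0 = 0"
  by (simp add: lin_comb_def fun_eq_iff)

lemma lin_comb_cong:
  assumes "\<And>i. i \<in> T \<Longrightarrow> x i = y i" and "\<And>i. i \<in> T \<Longrightarrow> u i = u' i"
  shows "lin_comb T u x = lin_comb T u' y"
  using assms by (simp add: lin_comb_def fun_eq_iff)

lemma lin_comb_insert:
  assumes "finite T" and "j \<notin> T"
  shows "lin_comb (insert j T) (u(j := v)) x = (\<lambda>l. x j * v l) + lin_comb T u x"
proof -
  have "lin_comb T (u(j := v)) x = lin_comb T u x"
    using assms(2) by (intro lin_comb_cong) auto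
  then show ?thesis
    using assms by (simp add: lin_comb_def fun_eq_iff)
qed

lemma bit_subspace_span_on: "bit_subspace (span_on T u)"
proof -
  have "lin_comb T u x + lin_comb T u y \<in> span_on T u"
    if "x \<in> supported_on T" and "y \<in> supported_on T" for x y
    using that bit_subspace_supported_on[of T] unfolding span_on_def bit_subspace_def
    by (metis image_eqI lin_comb_add)
  then show ?thesis
    using bit_subspace_supported_on[of T] unfolding bit_subspace_def span_on_def
    by (auto intro: image_eqI[where x = 0])
qed

lemma span_on_subset_supported_on:
  assumes "u ` T \<subseteq> supported_on A"
  shows "span_on T u \<subseteq> supported_on A"
proof
  fix w assume "w \<in> span_on T u"
  then obtain x where "w = lin_comb T u x"
    by (auto simp: span_on_def)
  moreover have "u i l = 0" if "i \<in> T" and "l \<notin> A" for i l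
    using assms that by (auto simp: supported_on_def)
  ultimately show "w \<in> supported_on A"
    by (simp add: supported_on_def lin_comb_def)
qed

lemma image_subset_span_on:
  assumes "finite T"
  shows "u ` T \<subseteq> span_on T u"
proof
  fix v assume "v \<in> u ` T"
  then obtain i where i: "i \<in> T" and v: "v = u i"
    by blast
  let ?e = "\<lambda>k. if k = i then 1 else (0 :: bit)"
  have "lin_comb T u ?e = u i"
    using assms i by (simp add: lin_comb_def fun_eq_iff if_distrib[of "\<lambda>y. y * _"] cong: if_cong)
  moreover have "?e \<in> supported_on T"
    using i by (simp add: supported_on_def)
  ultimately show "v \<in> span_on T u"
    unfolding span_on_def v by (metis image_eqI)
qed

lemma finite_span_on [simp]: "finite T \<Longrightarrow> finite (span_on T u)"
  by (simp add: span_on_def)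

lemma card_span_on_le: "finite T \<Longrightarrow> card (span_on T u) \<le> 2 ^ card T"
  unfolding span_on_def using card_image_le[of "supported_on T" "lin_comb T u"]
  by (simp add: card_supported_on)

lemma finite_kernel_on [simp]: "finite T \<Longrightarrow> finite (kernel_on T u)"
  by (simp add: kernel_on_def)

lemma zero_in_kernel_on [simp]: "0 \<in> kernel_on T u"
  by (simp add: kernel_on_def bit_subspace_supported_on[unfolded bit_subspace_def])

lemma kernel_on_empty: "kernel_on {} u = {0}"
  by (auto simp: kernel_on_def supported_on_def fun_eq_iff)

lemma card_fiber_le_card_kernel_on:
  assumes "finite T"
  shows "card {x \<in> supported_on T. lin_comb T u x = v} \<le> card (kernel_on T u)"
    (is "card ?F \<le> _")
proof (cases "?F = {}")
  case True
  show ?thesis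
    unfolding True by simp
next
  case False
  then obtain a where a: "a \<in> ?F"
    by blast
  have "inj_on ((+) a) ?F"
    by (rule inj_onI) (metis bit_vector_add_cancel)
  moreover have "(+) a ` ?F \<subseteq> kernel_on T u"
    using a bit_subspace_supported_on[of T]
    by (auto simp: kernel_on_def lin_comb_add bit_subspace_def)
  ultimately show ?thesis
    using assms by (intro card_inj_on_le) auto
qed

lemma two_pow_card_le_card_span_on_kernel_on:
  assumes "finite T"
  shows "2 ^ card T \<le> card (span_on T u) * card (kernel_on T u)"
proof -
  have "supported_on T \<subseteq> (\<Union>v\<in>span_on T u. {x \<in> supported_on T. lin_comb T u x = v})"
    unfolding span_on_def by blast
  then have "card (supported_on T)
      \<le> card (\<Union>v\<in>span_on T u. {x \<in> supported_on T. lin_comb T u x = v})"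
    using assms by (intro card_mono) simp_all
  also have "\<dots> \<le> (\<Sum>v\<in>span_on T u. card {x \<in> supported_on T. lin_comb T u x = v})"
    using assms by (intro card_UN_le) simp
  also have "\<dots> \<le> (\<Sum>v\<in>span_on T u. card (kernel_on T u))"
    by (intro sum_mono card_fiber_le_card_kernel_on assms)
  finally show ?thesis
    using assms by (simp add: card_supported_on)
qed

lemma symp_orth_antimono: "U \<subseteq> U' \<Longrightarrow> symp_orth m U' \<subseteq> symp_orth m U"
  by (auto simp: symp_orth_def)

lemma symp_orth_span_on:
  assumes "finite T"
  shows "symp_orth m (span_on T u) = symp_orth m (u ` T)"
proof
  show "symp_orth m (span_on T u) \<subseteq> symp_orth m (u ` T)"
    by (rule symp_orth_antimono[OF image_subset_span_on[OF assms]])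
  show "symp_orth m (u ` T) \<subseteq> symp_orth m (span_on T u)"
    by (auto simp: symp_orth_def span_on_def lin_comb_def symp_form_sum_left)
qed

lemma card_symp_orth_le:
  assumes "finite T" and "u ` T \<subseteq> symp_space m" and "card T \<le> 2 * m"
  shows "card (symp_orth m (u ` T)) \<le> 2 ^ (2 * m - card T) * card (kernel_on T u)"
proof -
  have "card (symp_orth m (u ` T)) * 2 ^ card T
      \<le> card (symp_orth m (u ` T)) * (card (span_on T u) * card (kernel_on T u))"
    using two_pow_card_le_card_span_on_kernel_on[OF assms(1)] by simp
  also have "\<dots> = card (span_on T u) * card (symp_orth m (span_on T u)) * card (kernel_on T u)"
    by (simp add: symp_orth_span_on[OF assms(1)])
  also have "\<dots> = 2 ^ (2 * m - card T) * card (kernel_on T u) * 2 ^ card T"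
    using card_mult_card_symp_orth[OF bit_subspace_span_on span_on_subset_supported_on[OF assms(2)]]
      assms(3)
    by (simp add: mult_ac flip: power_add)
  finally show ?thesis
    by simp
qed

lemma kernel_on_insert_subset:
  assumes "finite T" and "j \<notin> T"
  shows "kernel_on (insert j T) (u(j := v))
    \<subseteq> kernel_on T u \<union> (\<lambda>x. x(j := 1)) ` {x \<in> supported_on T. lin_comb T u x = v}"
proof
  fix x assume x: "x \<in> kernel_on (insert j T) (u(j := v))"
  then have sum0: "(\<lambda>l. x j * v l) + lin_comb T u x = 0"
    using lin_comb_insert[OF assms] by (simp add: kernel_on_def)
  show "x \<in> kernel_on T u \<union> (\<lambda>x. x(j := 1)) ` {x \<in> supported_on T. lin_comb T u x = v}"
  proof (cases "x j = 0")
    case True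
    then show ?thesis
      using x sum0 by (auto simp: kernel_on_def supported_on_def fun_eq_iff)
  next
    case False
    have "lin_comb T u (x(j := 0)) = lin_comb T u x"
      using assms(2) by (intro lin_comb_cong) auto
    then have "x(j := 0) \<in> {x \<in> supported_on T. lin_comb T u x = v}"
      using x sum0 False
      by (auto simp: kernel_on_def supported_on_def fun_eq_iff bit_add_eq_0_iff)
    moreover have "x = (x(j := 0))(j := 1)"
      using False by (simp add: fun_eq_iff)
    ultimately show ?thesis
      by blast
  qed
qed

lemma card_kernel_on_insert_le:
  assumes "finite T" and "j \<notin> T"
  shows "card (kernel_on (insert j T) (u(j := v)))
    \<le> (if v \<in> span_on T u then 2 else 1) * card (kernel_on T u)"
proof -
  let ?F = "{x \<in> supported_on T. lin_comb T u x = v}"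
  have "card (kernel_on (insert j T) (u(j := v))) \<le> card (kernel_on T u \<union> (\<lambda>x. x(j := 1)) ` ?F)"
    using kernel_on_insert_subset[OF assms] assms(1) by (intro card_mono) simp_all
  also have "\<dots> \<le> card (kernel_on T u) + card ((\<lambda>x. x(j := 1)) ` ?F)"
    by (rule card_Un_le)
  also have "\<dots> \<le> card (kernel_on T u) + card ?F"
    using assms(1) by (simp add: card_image_le)
  finally have "card (kernel_on (insert j T) (u(j := v))) \<le> card (kernel_on T u) + card ?F" .
  moreover have "card ?F = 0" if "v \<notin> span_on T u"
    using that by (auto simp: span_on_def card_eq_0_iff)
  ultimately show ?thesis
    using card_fiber_le_card_kernel_on[OF assms(1), of u v] by auto
qed

section \<open>Isotropic tuples\<close>

definition isotropic_tuples :: "nat \<Rightarrow> 'i set \<Rightarrow> ('i \<Rightarrow> nat \<Rightarrow> bit) set" where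
  "isotropic_tuples m T = {u. u ` T \<subseteq> symp_space m \<and> (\<forall>i. i \<notin> T \<longrightarrow> u i = 0) \<and>
     (\<forall>i\<in>T. \<forall>i'\<in>T. symp_form m (u i) (u i') = 0)}"

definition kernel_moment :: "nat \<Rightarrow> 'i set \<Rightarrow> nat \<Rightarrow> real" where
  "kernel_moment m T p = (\<Sum>u\<in>isotropic_tuples m T. real (card (kernel_on T u)) ^ p)"

lemma finite_isotropic_tuples [simp]:
  assumes "finite T"
  shows "finite (isotropic_tuples m T)"
proof -
  have "isotropic_tuples m T \<subseteq> (\<lambda>f i. if i \<in> T then f i else 0) ` (T \<rightarrow>\<^sub>E symp_space m)"
  proof
    fix u assume u: "u \<in> isotropic_tuples m T"
    then have "u = (\<lambda>i. if i \<in> T then restrict u T i else 0)"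
      by (auto simp: isotropic_tuples_def fun_eq_iff)
    moreover have "restrict u T \<in> T \<rightarrow>\<^sub>E symp_space m"
      using u by (auto simp: isotropic_tuples_def)
    ultimately show "u \<in> (\<lambda>f i. if i \<in> T then f i else 0) ` (T \<rightarrow>\<^sub>E symp_space m)"
      by blast
  qed
  moreover have "finite (T \<rightarrow>\<^sub>E symp_space m)"
    using assms by (simp add: finite_PiE)
  ultimately show ?thesis
    using finite_surj by blast
qed

lemma kernel_moment_empty: "kernel_moment m {} p = 1"
proof -
  have iso: "isotropic_tuples m {} = {0}"
    by (auto simp: isotropic_tuples_def fun_eq_iff)
  show ?thesis
    unfolding kernel_moment_def iso by (simp add: kernel_on_empty)
qed

lemma bij_betw_isotropic_tuples_insert:
  assumes "j \<notin> T"
  shows "bij_betw (\<lambda>(u, v). u(j := v))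
    (SIGMA u:isotropic_tuples m T. symp_orth m (u ` T)) (isotropic_tuples m (insert j T))"
proof (rule bij_betw_byWitness[where f' = "\<lambda>w. (w(j := 0), w j)"])
  show "\<forall>x\<in>(SIGMA u:isotropic_tuples m T. symp_orth m (u ` T)).
      (\<lambda>w. (w(j := 0), w j)) ((\<lambda>(u, v). u(j := v)) x) = x"
    using assms by (auto simp: isotropic_tuples_def fun_eq_iff)
  show "(\<lambda>(u, v). u(j := v)) ` (SIGMA u:isotropic_tuples m T. symp_orth m (u ` T))
      \<subseteq> isotropic_tuples m (insert j T)"
    using assms by (auto simp: isotropic_tuples_def symp_orth_def symp_form_commute)
  show "(\<lambda>w. (w(j := 0), w j)) ` isotropic_tuples m (insert j T)
      \<subseteq> (SIGMA u:isotropic_tuples m T. symp_orth m (u ` T))"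
    using assms by (auto simp: isotropic_tuples_def symp_orth_def)
qed auto

lemma sum_card_kernel_on_insert_pow_le:
  assumes "finite T" and "j \<notin> T"
  shows "(\<Sum>v\<in>symp_orth m (u ` T). real (card (kernel_on (insert j T) (u(j := v)))) ^ p)
    \<le> real (card (symp_orth m (u ` T)) + 2 ^ p * card (span_on T u)) * real (card (kernel_on T u)) ^ p"
proof -
  let ?Z = "real (card (kernel_on T u))"
  let ?S = "span_on T u"
  let ?O = "symp_orth m (u ` T)"
  have "real (card (kernel_on (insert j T) (u(j := v)))) ^ p
      \<le> ?Z ^ p + (if v \<in> ?S then 2 ^ p * ?Z ^ p else 0)" for v
  proof -
    have "real (card (kernel_on (insert j T) (u(j := v)))) \<le> (if v \<in> ?S then 2 else 1) * ?Z"
      using card_kernel_on_insert_le[OF assms, of u v] by (simp split: if_splits)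
    then have "real (card (kernel_on (insert j T) (u(j := v)))) ^ p
        \<le> ((if v \<in> ?S then 2 else 1) * ?Z) ^ p"
      by (rule power_mono) simp
    then show ?thesis
      by (cases "v \<in> ?S") (simp_all add: power_mult_distrib add_increasing)
  qed
  then have "(\<Sum>v\<in>?O. real (card (kernel_on (insert j T) (u(j := v)))) ^ p)
      \<le> (\<Sum>v\<in>?O. ?Z ^ p + (if v \<in> ?S then 2 ^ p * ?Z ^ p else 0))"
    by (rule sum_mono)
  also have "\<dots> = real (card ?O) * ?Z ^ p + real (card (?O \<inter> ?S)) * 2 ^ p * ?Z ^ p"
    using sum.inter_restrict[OF finite_symp_orth[of m "u ` T"], of "\<lambda>_. 2 ^ p * ?Z ^ p" ?S]
    by (simp add: sum.distrib)
  also have "\<dots> \<le> real (card ?O) * ?Z ^ p + real (card ?S) * 2 ^ p * ?Z ^ p"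
    using card_mono[OF finite_span_on[OF assms(1)], of "?O \<inter> ?S"] by (simp add: mult_right_mono)
  finally show ?thesis
    by (simp add: algebra_simps)
qed

lemma card_symp_orth_add_span_on_le:
  assumes "finite T" and "u ` T \<subseteq> symp_space m" and "p + 2 * card T \<le> 2 * m"
  shows "card (symp_orth m (u ` T)) + 2 ^ p * card (span_on T u)
    \<le> 2 * 2 ^ (2 * m - card T) * card (kernel_on T u)"
proof -
  have "kernel_on T u \<noteq> {}"
    using zero_in_kernel_on by blast
  then have "1 \<le> card (kernel_on T u)"
    using assms(1) by (simp add: Suc_le_eq card_gt_0_iff)
  have "2 ^ p * card (span_on T u) \<le> 2 ^ p * 2 ^ card T"
    using card_span_on_le[OF assms(1)] by simp
  also have "\<dots> \<le> 2 ^ (2 * m - card T)"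
    using assms(3) by (simp flip: power_add)
  also have "\<dots> \<le> 2 ^ (2 * m - card T) * card (kernel_on T u)"
    using \<open>1 \<le> card (kernel_on T u)\<close> by simp
  finally show ?thesis
    using card_symp_orth_le[OF assms(1,2)] assms(3) by simp
qed

lemma kernel_moment_insert_le:
  assumes "finite T" and "j \<notin> T" and "p + 2 * card T \<le> 2 * m"
  shows "kernel_moment m (insert j T) p \<le> 2 * 2 ^ (2 * m - card T) * kernel_moment m T (p + 1)"
proof -
  have "kernel_moment m (insert j T) p
      = (\<Sum>x\<in>(SIGMA u:isotropic_tuples m T. symp_orth m (u ` T)).
          real (card (kernel_on (insert j T) ((\<lambda>(u, v). u(j := v)) x))) ^ p)"
    unfolding kernel_moment_def
    by (rule sum.reindex_bij_betw[OF bij_betw_isotropic_tuples_insert[OF assms(2)], symmetric])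
  also have "\<dots> = (\<Sum>u\<in>isotropic_tuples m T. \<Sum>v\<in>symp_orth m (u ` T).
      real (card (kernel_on (insert j T) (u(j := v)))) ^ p)"
    using assms(1) by (subst sum.Sigma) (simp_all add: case_prod_beta)
  also have "\<dots> \<le> (\<Sum>u\<in>isotropic_tuples m T.
      real (2 * 2 ^ (2 * m - card T) * card (kernel_on T u)) * real (card (kernel_on T u)) ^ p)"
  proof (rule sum_mono)
    fix u assume "u \<in> isotropic_tuples m T"
    then have "card (symp_orth m (u ` T)) + 2 ^ p * card (span_on T u)
        \<le> 2 * 2 ^ (2 * m - card T) * card (kernel_on T u)"
      using assms by (intro card_symp_orth_add_span_on_le) (simp_all add: isotropic_tuples_def)
    then have "real (card (symp_orth m (u ` T)) + 2 ^ p * card (span_on T u)) * real (card (kernel_on T u)) ^ p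
        \<le> real (2 * 2 ^ (2 * m - card T) * card (kernel_on T u)) * real (card (kernel_on T u)) ^ p"
      by (intro mult_right_mono) (simp only: of_nat_le_iff, simp)
    then show "(\<Sum>v\<in>symp_orth m (u ` T). real (card (kernel_on (insert j T) (u(j := v)))) ^ p)
        \<le> real (2 * 2 ^ (2 * m - card T) * card (kernel_on T u)) * real (card (kernel_on T u)) ^ p"
      by (rule order_trans[OF sum_card_kernel_on_insert_pow_le[OF assms(1,2)]])
  qed
  also have "\<dots> = 2 * 2 ^ (2 * m - card T) * kernel_moment m T (p + 1)"
    by (simp add: kernel_moment_def sum_distrib_left mult_ac)
  finally show ?thesis .
qed

lemma kernel_moment_le:
  assumes "finite T" and "p + 2 * card T \<le> 2 * m"
  shows "kernel_moment m T p
    \<le> 2 powr ((2 * real m + 1) * card T - real (card T) * (real (card T) - 1) / 2)"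
  using assms
proof (induction T arbitrary: p rule: finite_induct)
  case empty
  then show ?case
    by (simp add: kernel_moment_empty)
next
  case (insert j T)
  let ?d = "card T"
  let ?E = "\<lambda>d. (2 * real m + 1) * d - real d * (real d - 1) / 2"
  have d: "card (insert j T) = ?d + 1" and dm: "?d \<le> 2 * m"
    using insert by simp_all
  have "kernel_moment m (insert j T) p \<le> 2 * 2 ^ (2 * m - ?d) * kernel_moment m T (p + 1)"
    using insert by (intro kernel_moment_insert_le) simp_all
  also have "\<dots> \<le> 2 * 2 ^ (2 * m - ?d) * 2 powr ?E ?d"
    using insert by (intro mult_left_mono insert.IH) simp_all
  also have "\<dots> = 2 powr (1 + real (2 * m - ?d) + ?E ?d)"
    by (simp add: powr_add powr_realpow)
  also have "1 + real (2 * m - ?d) + ?E ?d = ?E (card (insert j T))"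
    unfolding d using dm by (simp add: of_nat_diff field_simps)
  finally show ?case .
qed

section \<open>Pairs of matrices as tuples of stacked columns\<close>

lemma index_mult_mat_sum:
  assumes "A \<in> carrier_mat nr n" and "B \<in> carrier_mat n nc" and "i < nr" and "j < nc"
  shows "(A * B) $$ (i, j) = (\<Sum>l<n. A $$ (i, l) * B $$ (l, j))"
  using assms by (simp add: scalar_prod_def atLeast0LessThan)

definition symp_gram :: "'a :: comm_ring_1 mat \<Rightarrow> 'a mat \<Rightarrow> 'a mat" where
  "symp_gram C B = transpose_mat C * B + transpose_mat B * C"

lemma symp_gram_carrier:
  "C \<in> carrier_mat m n \<Longrightarrow> B \<in> carrier_mat m n \<Longrightarrow> symp_gram C B \<in> carrier_mat n n"
  unfolding symp_gram_def by auto

lemma symp_gram_mult: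
  fixes C B P :: "'a :: comm_ring_1 mat"
  assumes C: "C \<in> carrier_mat m n" and B: "B \<in> carrier_mat m n" and P: "P \<in> carrier_mat n n"
  shows "symp_gram (C * P) (B * P) = transpose_mat P * (symp_gram C B * P)"
proof -
  have congruence: "transpose_mat (X * P) * (Y * P) = transpose_mat P * (transpose_mat X * Y * P)"
    if X: "X \<in> carrier_mat m n" and Y: "Y \<in> carrier_mat m n" for X Y
  proof -
    have XT: "transpose_mat X \<in> carrier_mat n m"
      using X by simp
    have "transpose_mat (X * P) * (Y * P) = transpose_mat P * transpose_mat X * (Y * P)"
      by (simp add: transpose_mult[OF X P])
    also have "\<dots> = transpose_mat P * (transpose_mat X * (Y * P))"
      using P XT Y by (intro assoc_mult_mat) auto
    also have "transpose_mat X * (Y * P) = transpose_mat X * Y * P"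
      using XT Y P by (intro assoc_mult_mat[symmetric])
    finally show ?thesis .
  qed
  have distrib: "symp_gram C B * P = transpose_mat C * B * P + transpose_mat B * C * P"
    unfolding symp_gram_def using C B P by (intro add_mult_distrib_mat) auto
  have "transpose_mat P * (symp_gram C B * P)
      = transpose_mat P * (transpose_mat C * B * P) + transpose_mat P * (transpose_mat B * C * P)"
    unfolding distrib using C B P by (intro mult_add_distrib_mat) auto
  then show ?thesis
    unfolding symp_gram_def using C B by (simp add: congruence)
qed

definition stacked_col :: "nat \<Rightarrow> bit mat \<Rightarrow> bit mat \<Rightarrow> nat \<Rightarrow> nat \<Rightarrow> bit" where
  "stacked_col m C B k = (\<lambda>l. if l < m then C $$ (l, k) else if l < 2 * m then B $$ (l - m, k) else 0)"

lemma stacked_col_in_symp_space: "stacked_col m C B k \<in> symp_space m"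
  by (simp add: stacked_col_def supported_on_def)

lemma symp_gram_eq_symp_form:
  assumes "C \<in> carrier_mat m n" and "B \<in> carrier_mat m n" and "k < n" and "j < n"
  shows "symp_gram C B $$ (k, j) = symp_form m (stacked_col m C B k) (stacked_col m C B j)"
proof -
  have "symp_gram C B $$ (k, j)
      = (\<Sum>l<m. C $$ (l, k) * B $$ (l, j)) + (\<Sum>l<m. B $$ (l, k) * C $$ (l, j))"
    using assms by (simp add: symp_gram_def scalar_prod_def atLeast0LessThan)
  then show ?thesis
    by (simp add: symp_form_def stacked_col_def sum.distrib)
qed

lemma stacked_col_inj:
  assumes "C \<in> carrier_mat m n" "B \<in> carrier_mat m n" "C' \<in> carrier_mat m n" "B' \<in> carrier_mat m n"
    and "\<And>k. k < n \<Longrightarrow> stacked_col m C B k = stacked_col m C' B' k"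
  shows "C = C' \<and> B = B'"
proof
  have eq: "stacked_col m C B j l = stacked_col m C' B' j l" if "j < n" for j l
    using assms(5) that by simp
  show "C = C'"
  proof (rule eq_matI)
    fix i j assume "i < dim_row C'" "j < dim_col C'"
    then show "C $$ (i, j) = C' $$ (i, j)"
      using assms(1,3) eq[of j i] by (simp add: stacked_col_def)
  qed (use assms(1,3) in auto)
  show "B = B'"
  proof (rule eq_matI)
    fix i j assume "i < dim_row B'" "j < dim_col B'"
    then show "B $$ (i, j) = B' $$ (i, j)"
      using assms(2,4) eq[of j "m + i"] by (simp add: stacked_col_def)
  qed (use assms(2,4) in auto)
qed

definition pairs_zero_cols :: "nat \<Rightarrow> nat \<Rightarrow> nat set \<Rightarrow> (bit mat \<times> bit mat) set" where
  "pairs_zero_cols m n T = {(C, B). C \<in> carrier_mat m n \<and> B \<in> carrier_mat m n \<and>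
     (\<forall>j\<in>T. \<forall>k<n. symp_gram C B $$ (k, j) = 0)}"

lemma pairs_zero_cols_symp_form:
  assumes "(C, B) \<in> pairs_zero_cols m n T" and "T \<subseteq> {0..<n}" and "j \<in> T" and "k < n"
  shows "symp_form m (stacked_col m C B j) (stacked_col m C B k) = 0"
  using assms symp_gram_eq_symp_form[of C m n B k j] symp_form_commute
  by (auto simp: pairs_zero_cols_def)

text \<open>The stacked columns indexed by \<open>T\<close> form an isotropic tuple, and all the other columns lie in
  its orthogonal complement.\<close>
lemma card_pairs_zero_cols_le_sum:
  assumes "T \<subseteq> {0..<n}"
  shows "card (pairs_zero_cols m n T)
    \<le> (\<Sum>u\<in>isotropic_tuples m T. card (symp_orth m (u ` T)) ^ (n - card T))"
proof -
  define R where "R = {0..<n} - T"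
  have fin: "finite T" "finite R"
    using assms finite_subset unfolding R_def by auto
  define \<phi> where "\<phi> = (\<lambda>(C, B). (\<lambda>k. if k \<in> T then stacked_col m C B k else 0,
      restrict (stacked_col m C B) R))"
  let ?Sigma = "SIGMA u:isotropic_tuples m T. R \<rightarrow>\<^sub>E symp_orth m (u ` T)"
  have "\<phi> (C, B) \<in> ?Sigma" if "(C, B) \<in> pairs_zero_cols m n T" for C B
    using pairs_zero_cols_symp_form[OF that assms] assms
    by (auto simp: \<phi>_def R_def isotropic_tuples_def symp_orth_def stacked_col_in_symp_space)
  then have "\<phi> ` pairs_zero_cols m n T \<subseteq> ?Sigma"
    by (intro image_subsetI) (metis surj_pair)
  moreover have "inj_on \<phi> (pairs_zero_cols m n T)"
  proof (rule inj_onI, clarify)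
    fix C B C' B' assume "(C, B) \<in> pairs_zero_cols m n T" "(C', B') \<in> pairs_zero_cols m n T"
      and "\<phi> (C, B) = \<phi> (C', B')"
    then show "C = C' \<and> B = B'"
      by (intro stacked_col_inj[of C m n B C' B'])
         (auto simp: pairs_zero_cols_def \<phi>_def R_def fun_eq_iff restrict_def split: if_splits)
  qed
  moreover have "finite ?Sigma"
    using fin by (auto intro!: finite_SigmaI finite_PiE)
  ultimately have "card (pairs_zero_cols m n T) \<le> card ?Sigma"
    by (intro card_inj_on_le)
  also have "\<dots> = (\<Sum>u\<in>isotropic_tuples m T. card (symp_orth m (u ` T)) ^ card R)"
    using fin by (subst card_SigmaI) (simp_all add: card_PiE finite_PiE)
  finally show ?thesis
    using assms by (simp add: R_def card_Diff_subset fin)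
qed

lemma card_pairs_zero_cols_le:
  assumes "T \<subseteq> {0..<n}" and "card T = d" and "n + d \<le> 2 * m"
  shows "card (pairs_zero_cols m n T)
    \<le> 2 powr ((2 * real m - d) * (real n - d) + ((2 * real m + 1) * d - d * (real d - 1) / 2))"
proof -
  have fin: "finite T"
    using assms(1) finite_subset by blast
  have dn: "d \<le> n"
    using assms(1,2) card_mono[OF _ assms(1)] by simp
  have orth: "real (card (symp_orth m (u ` T))) \<le> 2 ^ (2 * m - d) * real (card (kernel_on T u))"
    if "u \<in> isotropic_tuples m T" for u
  proof -
    have "card (symp_orth m (u ` T)) \<le> 2 ^ (2 * m - d) * card (kernel_on T u)"
      using card_symp_orth_le[OF fin, of u m] that assms by (simp add: isotropic_tuples_def)
    then have "real (card (symp_orth m (u ` T))) \<le> real (2 ^ (2 * m - d) * card (kernel_on T u))"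
      by (simp only: of_nat_le_iff)
    then show ?thesis
      by simp
  qed
  have "real (card (pairs_zero_cols m n T))
      \<le> real (\<Sum>u\<in>isotropic_tuples m T. card (symp_orth m (u ` T)) ^ (n - d))"
    using card_pairs_zero_cols_le_sum[OF assms(1)] assms(2) by (simp only: of_nat_le_iff)
  also have "\<dots> \<le> (\<Sum>u\<in>isotropic_tuples m T. (2 ^ (2 * m - d) * real (card (kernel_on T u))) ^ (n - d))"
    unfolding of_nat_sum of_nat_power using orth by (intro sum_mono power_mono) simp_all
  also have "\<dots> = 2 ^ ((2 * m - d) * (n - d)) * kernel_moment m T (n - d)"
    by (simp add: kernel_moment_def power_mult_distrib power_mult sum_distrib_left)
  also have "\<dots> \<le> 2 ^ ((2 * m - d) * (n - d)) * 2 powr ((2 * real m + 1) * d - d * (real d - 1) / 2)"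
    using kernel_moment_le[OF fin, of "n - d" m] assms dn by (intro mult_left_mono) simp_all
  also have "(2 :: real) ^ ((2 * m - d) * (n - d)) = 2 powr ((2 * real m - d) * (real n - d))"
    using assms(3) dn by (simp add: powr_realpow[symmetric] of_nat_diff)
  finally show ?thesis
    by (simp add: powr_add[symmetric])
qed

section \<open>Column elimination in matrices of low rank\<close>

lemma (in vec_space) cols_subset_span_maximal_indpt:
  assumes M: "M \<in> carrier_mat n nc" and U: "maximal U (\<lambda>X. X \<subseteq> set (cols M) \<and> lin_indpt X)"
  shows "set (cols M) \<subseteq> span U"
proof
  fix v assume v: "v \<in> set (cols M)"
  have UC: "U \<subseteq> set (cols M)" and indpt: "lin_indpt U"
    using U unfolding maximal_def by auto
  have colsC: "set (cols M) \<subseteq> carrier_vec n"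
    using cols_dim[of M] M by simp
  then have UV: "U \<subseteq> carrier_vec n"
    using UC by blast
  show "v \<in> span U"
  proof (rule ccontr)
    assume ns: "v \<notin> span U"
    then have notU: "v \<notin> U"
      using in_own_span[OF UV] by blast
    then have "\<not> lin_dep (U \<union> {v})"
      using lin_dep_iff_in_span[OF UV indpt _ notU] ns v colsC by auto
    then have "U \<union> {v} = U"
      using U UC v unfolding maximal_def by blast
    then show False
      using notU by blast
  qed
qed

lemma column_basis_exists:
  fixes M :: "'a :: field mat"
  assumes M: "M \<in> carrier_mat nr n"
  obtains S where "S \<subseteq> {0..<n}" and "card S = vec_space.rank nr M"
    and "\<And>j. j < n \<Longrightarrow> \<exists>a. \<forall>k<nr. M $$ (k, j) = (\<Sum>i\<in>S. a i * M $$ (k, i))"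
proof -
  interpret vec_space "TYPE('a)" nr .
  let ?indpt = "\<lambda>X. X \<subseteq> set (cols M) \<and> lin_indpt X"
  obtain U where U: "maximal U ?indpt"
    using maximal_exists[of ?indpt "card (set (cols M))" "{}"]
    by (meson List.finite_set card_mono empty_iff empty_subsetI finite_lin_indpt2 rev_finite_subset)
  have "U \<subseteq> col M ` {0..<n}"
    using U M by (auto simp: maximal_def cols_def)
  then obtain S where S: "S \<subseteq> {0..<n}" "inj_on (col M) S" "U = col M ` S"
    by (auto simp: subset_image_inj)
  have UV: "U \<subseteq> carrier_vec nr" and finU: "finite U"
    using S M finite_subset[OF S(1)] by auto
  show ?thesis
  proof
    show "S \<subseteq> {0..<n}" and "card S = rank M"
      using S card_image[OF S(2)] rank_card_indpt[OF M U] by simp_all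
    fix j assume "j < n"
    then have "col M j \<in> span U"
      using cols_subset_span_maximal_indpt[OF M U] M by (auto simp: cols_def)
    then obtain c A where A: "col M j = lincomb c A" "A \<subseteq> U"
      using in_spanE by blast
    let ?a = "\<lambda>i. if col M i \<in> A then c (col M i) else 0"
    have "M $$ (k, j) = (\<Sum>i\<in>S. ?a i * M $$ (k, i))" if "k < nr" for k
    proof -
      have "M $$ (k, j) = lincomb c A $ k"
        using M \<open>j < n\<close> that A(1)[symmetric] by simp
      also have "\<dots> = (\<Sum>v\<in>A. c v * v $ k)"
        using A(2) UV that by (intro lincomb_index) auto
      also have "\<dots> = (\<Sum>v\<in>U. (if v \<in> A then c v else 0) * v $ k)"
        using A(2) finU by (simp add: if_distrib[of "\<lambda>x. x * _"] sum.If_cases Int_absorb1)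
      also have "\<dots> = (\<Sum>i\<in>S. ?a i * col M i $ k)"
        unfolding S(3) by (rule sum.reindex[OF S(2), unfolded comp_def])
      also have "\<dots> = (\<Sum>i\<in>S. ?a i * M $$ (k, i))"
        using S(1) M that by (intro sum.cong) auto
      finally show ?thesis .
    qed
    then show "\<exists>a. \<forall>k<nr. M $$ (k, j) = (\<Sum>i\<in>S. a i * M $$ (k, i))"
      by (intro exI[of _ ?a]) simp
  qed
qed

lemma low_rank_column_dependence:
  fixes M :: "'a :: field mat"
  assumes M: "M \<in> carrier_mat nr n" and rank: "vec_space.rank nr M + d \<le> n"
  obtains S T a where "S \<subseteq> {0..<n}" and "T \<subseteq> {0..<n}" and "S \<inter> T = {}" and "card T = d"
    and "card S + d \<le> n"
    and "\<And>j k. j \<in> T \<Longrightarrow> k < nr \<Longrightarrow> M $$ (k, j) = (\<Sum>i\<in>S. a (i, j) * M $$ (k, i))"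
proof -
  obtain S where S: "S \<subseteq> {0..<n}" "card S = vec_space.rank nr M"
    and comb: "\<And>j. j < n \<Longrightarrow> \<exists>a. \<forall>k<nr. M $$ (k, j) = (\<Sum>i\<in>S. a i * M $$ (k, i))"
    using column_basis_exists[OF M] by blast
  have "d \<le> card ({0..<n} - S)"
    using S rank by (simp add: card_Diff_subset finite_subset)
  then obtain T where T: "T \<subseteq> {0..<n} - S" "card T = d"
    by (meson obtain_subset_with_card_n)
  obtain a where a: "\<forall>j<n. \<forall>k<nr. M $$ (k, j) = (\<Sum>i\<in>S. a j i * M $$ (k, i))"
    using comb by metis
  show ?thesis
  proof (rule that[of S T "\<lambda>(i, j). a j i"])
    show "T \<subseteq> {0..<n}" and "S \<inter> T = {}"
      using T by auto
    show "card S + d \<le> n"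
      using S rank by simp
    fix j k assume "j \<in> T" and "k < nr"
    then show "M $$ (k, j) = (\<Sum>i\<in>S. (\<lambda>(i, j). a j i) (i, j) * M $$ (k, i))"
      using a T by auto
  qed (use S T in auto)
qed

definition elim_mat :: "nat \<Rightarrow> nat set \<Rightarrow> nat set \<Rightarrow> (nat \<times> nat \<Rightarrow> bit) \<Rightarrow> bit mat" where
  "elim_mat n S T a =
     mat n n (\<lambda>(i, j). (if i = j then 1 else 0) + (if i \<in> S \<and> j \<in> T then a (i, j) else 0))"

lemma elim_mat_carrier [simp]: "elim_mat n S T a \<in> carrier_mat n n"
  by (simp add: elim_mat_def)

lemma dim_elim_mat [simp]: "dim_row (elim_mat n S T a) = n" "dim_col (elim_mat n S T a) = n"
  by (simp_all add: elim_mat_def)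

lemma index_elim_mat:
  "i < n \<Longrightarrow> j < n \<Longrightarrow>
    elim_mat n S T a $$ (i, j) = (if i = j then 1 else 0) + (if i \<in> S \<and> j \<in> T then a (i, j) else 0)"
  by (simp add: elim_mat_def)

text \<open>Over \<open>\<bbbF>\<^sub>2\<close>, \<open>(1 + N)\<^sup>2 = 1 + N\<^sup>2 = 1\<close> since \<open>N\<close>, supported on \<open>S \<times> T\<close>, squares to zero.\<close>
lemma elim_mat_involution:
  assumes "S \<inter> T = {}"
  shows "elim_mat n S T a * elim_mat n S T a = 1\<^sub>m n"
proof (rule eq_matI)
  fix i j assume "i < dim_row (1\<^sub>m n :: bit mat)" and "j < dim_col (1\<^sub>m n :: bit mat)"
  then have ij: "i < n" "j < n"
    by auto
  let ?\<delta> = "\<lambda>i j. if i = j then 1 else (0 :: bit)"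
  let ?N = "\<lambda>i j. if i \<in> S \<and> j \<in> T then a (i, j) else (0 :: bit)"
  have "(elim_mat n S T a * elim_mat n S T a) $$ (i, j)
      = (\<Sum>l<n. elim_mat n S T a $$ (i, l) * elim_mat n S T a $$ (l, j))"
    by (rule index_mult_mat_sum[OF elim_mat_carrier elim_mat_carrier ij])
  also have "\<dots> = (\<Sum>l<n. ?\<delta> i l * (?\<delta> l j + ?N l j) + ?N i l * ?\<delta> l j)"
    using ij assms by (intro sum.cong refl) (auto simp: index_elim_mat algebra_simps)
  also have "\<dots> = ?\<delta> i j + ?N i j + ?N i j"
    using ij by (simp add: sum.distrib if_distrib[of "\<lambda>x. x * _"] if_distrib[of "\<lambda>x. _ * x"] sum.delta
        cong: if_cong)
  finally show "(elim_mat n S T a * elim_mat n S T a) $$ (i, j) = 1\<^sub>m n $$ (i, j)"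
    using ij by (simp add: add.assoc)
qed simp_all

lemma mult_elim_mat_col_eq_0:
  assumes M: "M \<in> carrier_mat nr n" and S: "S \<subseteq> {0..<n}"
    and j: "j \<in> T" "j < n" and k: "k < nr"
    and comb: "M $$ (k, j) = (\<Sum>i\<in>S. a (i, j) * M $$ (k, i))"
  shows "(M * elim_mat n S T a) $$ (k, j) = 0"
proof -
  have "(M * elim_mat n S T a) $$ (k, j) = (\<Sum>l<n. M $$ (k, l) * elim_mat n S T a $$ (l, j))"
    by (rule index_mult_mat_sum[OF M elim_mat_carrier k j(2)])
  also have "\<dots> = (\<Sum>l<n. M $$ (k, l) * (if l = j then 1 else 0))
      + (\<Sum>l<n. M $$ (k, l) * (if l \<in> S then a (l, j) else 0))"
    using j by (simp add: index_elim_mat distrib_left sum.distrib)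
  also have "(\<Sum>l<n. M $$ (k, l) * (if l = j then 1 else 0)) = M $$ (k, j)"
    using j by (simp add: if_distrib[of "\<lambda>y. _ * y"] sum.delta' cong: if_cong)
  also have "(\<Sum>l<n. M $$ (k, l) * (if l \<in> S then a (l, j) else 0)) = (\<Sum>i\<in>S. a (i, j) * M $$ (k, i))"
    using S by (intro sum.mono_neutral_cong_right) auto
  finally show ?thesis
    using comb by simp
qed

section \<open>Counting pairs of low rank\<close>

definition low_rank_pairs :: "nat \<Rightarrow> nat \<Rightarrow> nat \<Rightarrow> (bit mat \<times> bit mat) set" where
  "low_rank_pairs m n d = {(C, B). C \<in> carrier_mat m n \<and> B \<in> carrier_mat m n \<and>
     rank2 n (symp_gram C B) + d \<le> n}"

definition elim_data :: "nat \<Rightarrow> nat \<Rightarrow> ((nat set \<times> nat set) \<times> (nat \<times> nat \<Rightarrow> bit)) set" where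
  "elim_data n d = (SIGMA (S, T):{(S, T). S \<subseteq> {0..<n} \<and> T \<subseteq> {0..<n} \<and> S \<inter> T = {} \<and>
     card T = d \<and> card S + d \<le> n}. S \<times> T \<rightarrow>\<^sub>E UNIV)"

lemma finite_elim_data: "finite (elim_data n d)"
proof -
  have "finite {(S, T). S \<subseteq> {0..<n} \<and> T \<subseteq> {0..<n} \<and> S \<inter> T = {} \<and> card T = d \<and> card S + d \<le> n}"
    by (rule finite_subset[of _ "Pow {0..<n} \<times> Pow {0..<n}"]) auto
  then show ?thesis
    unfolding elim_data_def
    by (intro finite_SigmaI) (auto intro!: finite_PiE dest: finite_subset)
qed

lemma card_elim_data_le: "card (elim_data n d) \<le> 2 ^ (2 * n + (n - d) * d)"
proof -
  let ?ST = "{(S, T). S \<subseteq> {0..<n} \<and> T \<subseteq> {0..<n} \<and> S \<inter> T = {} \<and> card T = d \<and> card S + d \<le> n}"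
  have sub: "?ST \<subseteq> Pow {0..<n} \<times> Pow {0..<n}"
    by auto
  have fiber: "card (S \<times> T \<rightarrow>\<^sub>E (UNIV :: bit set)) \<le> 2 ^ ((n - d) * d)" if "(S, T) \<in> ?ST" for S T
  proof -
    have "finite S" and "finite T"
      using that finite_subset by auto
    then have "card (S \<times> T \<rightarrow>\<^sub>E (UNIV :: bit set)) = 2 ^ (card S * card T)"
      by (simp add: card_PiE card_UNIV_bit card_cartesian_product)
    also have "\<dots> \<le> 2 ^ ((n - d) * d)"
      using that by (intro power_increasing) auto
    finally show ?thesis .
  qed
  have "card (elim_data n d) = (\<Sum>(S, T)\<in>?ST. card (S \<times> T \<rightarrow>\<^sub>E (UNIV :: bit set)))"
    unfolding elim_data_def using finite_subset[OF sub]
    by (subst card_SigmaI) (auto simp: case_prod_unfold intro!: finite_PiE dest: finite_subset)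
  also have "\<dots> \<le> (\<Sum>(S, T)\<in>?ST. 2 ^ ((n - d) * d))"
    using fiber by (intro sum_mono) (auto split: prod.splits)
  also have "\<dots> = card ?ST * 2 ^ ((n - d) * d)"
    by (simp add: case_prod_unfold)
  also have "card ?ST \<le> 2 ^ (2 * n)"
    using card_mono[OF _ sub] by (simp add: card_cartesian_product card_Pow mult_2 power_add)
  finally show ?thesis
    by (simp add: power_add)
qed

lemma mult_elim_mat_in_pairs_zero_cols:
  assumes C: "C \<in> carrier_mat m n" and B: "B \<in> carrier_mat m n"
    and S: "S \<subseteq> {0..<n}" and T: "T \<subseteq> {0..<n}"
    and comb: "\<And>j k. j \<in> T \<Longrightarrow> k < n \<Longrightarrow>
      symp_gram C B $$ (k, j) = (\<Sum>i\<in>S. a (i, j) * symp_gram C B $$ (k, i))"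
  shows "(C * elim_mat n S T a, B * elim_mat n S T a) \<in> pairs_zero_cols m n T"
proof -
  let ?M = "symp_gram C B"
  let ?P = "elim_mat n S T a"
  have M: "?M \<in> carrier_mat n n"
    using symp_gram_carrier[OF C B] .
  have "symp_gram (C * ?P) (B * ?P) $$ (k, j) = 0" if "j \<in> T" and "k < n" for j k
  proof -
    have "symp_gram (C * ?P) (B * ?P) $$ (k, j)
        = (\<Sum>l<n. transpose_mat ?P $$ (k, l) * (?M * ?P) $$ (l, j))"
      unfolding symp_gram_mult[OF C B elim_mat_carrier] using that T M
      by (intro index_mult_mat_sum) auto
    moreover have "(?M * ?P) $$ (l, j) = 0" if "l < n" for l
      using that \<open>j \<in> T\<close> T comb[OF \<open>j \<in> T\<close> that] by (intro mult_elim_mat_col_eq_0[OF M S]) auto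
    ultimately show ?thesis
      by simp
  qed
  then show ?thesis
    using C B by (auto simp: pairs_zero_cols_def)
qed

text \<open>If \<open>rank (C\<^sup>TB + B\<^sup>TC) \<le> n - d\<close>, a column operation \<open>P\<close> with \<open>P\<^sup>2 = 1\<close> clears \<open>d\<close>
  columns of \<open>(C\<^sup>TB + B\<^sup>TC)P\<close>, hence of \<open>(CP)\<^sup>T(BP) + (BP)\<^sup>T(CP) = P\<^sup>T(C\<^sup>TB + B\<^sup>TC)P\<close>.\<close>
lemma low_rank_pairs_subset:
  "low_rank_pairs m n d \<subseteq> (\<Union>((S, T), a)\<in>elim_data n d.
      (\<lambda>(C, B). (C * elim_mat n S T a, B * elim_mat n S T a)) ` pairs_zero_cols m n T)"
proof clarify
  fix C B assume "(C, B) \<in> low_rank_pairs m n d"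
  then have C: "C \<in> carrier_mat m n" and B: "B \<in> carrier_mat m n"
    and rank: "vec_space.rank n (symp_gram C B) + d \<le> n"
    by (auto simp: low_rank_pairs_def rank2_def)
  obtain S T a where S: "S \<subseteq> {0..<n}" and T: "T \<subseteq> {0..<n}" and ST: "S \<inter> T = {}"
    and d: "card T = d" "card S + d \<le> n"
    and comb: "\<And>j k. j \<in> T \<Longrightarrow> k < n \<Longrightarrow>
      symp_gram C B $$ (k, j) = (\<Sum>i\<in>S. a (i, j) * symp_gram C B $$ (k, i))"
    using low_rank_column_dependence[OF symp_gram_carrier[OF C B] rank] by blast
  define a' where "a' = restrict a (S \<times> T)"
  define P where "P = elim_mat n S T a'"
  have P: "P \<in> carrier_mat n n"
    by (simp add: P_def)
  have "(C * P, B * P) \<in> pairs_zero_cols m n T"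
    unfolding P_def using comb by (intro mult_elim_mat_in_pairs_zero_cols[OF C B S T]) (simp add: a'_def)
  moreover have "C * P * P = C" and "B * P * P = B"
    using assoc_mult_mat[OF C P P] assoc_mult_mat[OF B P P] elim_mat_involution[OF ST] C B
    by (simp_all add: P_def)
  ultimately have "(C, B) \<in> (\<lambda>(C, B). (C * P, B * P)) ` pairs_zero_cols m n T"
    by (auto intro!: image_eqI[where x = "(C * P, B * P)"])
  moreover have "((S, T), a') \<in> elim_data n d"
    using S T ST d by (auto simp: elim_data_def a'_def)
  ultimately show "(C, B) \<in> (\<Union>((S, T), a)\<in>elim_data n d.
      (\<lambda>(C, B). (C * elim_mat n S T a, B * elim_mat n S T a)) ` pairs_zero_cols m n T)"
    unfolding UN_iff P_def by (intro bexI) simp_all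
qed

lemma bij_betw_carrier_mat_PiE:
  "bij_betw (\<lambda>A. restrict (\<lambda>ij. A $$ ij) ({0..<m} \<times> {0..<n})) (carrier_mat m n)
    ({0..<m} \<times> {0..<n} \<rightarrow>\<^sub>E UNIV)"
proof (rule bij_betw_byWitness[where f' = "mat m n"])
  show "\<forall>A\<in>carrier_mat m n. mat m n (restrict (\<lambda>ij. A $$ ij) ({0..<m} \<times> {0..<n})) = A"
    by (auto intro!: eq_matI)
  show "\<forall>f\<in>{0..<m} \<times> {0..<n} \<rightarrow>\<^sub>E UNIV. restrict (\<lambda>ij. mat m n f $$ ij) ({0..<m} \<times> {0..<n}) = f"
    by (auto simp: fun_eq_iff PiE_def extensional_def)
qed (simp_all add: restrict_PiE_iff image_subset_iff)

lemma finite_carrier_mat: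
  assumes "finite (UNIV :: 'a set)"
  shows "finite (carrier_mat m n :: 'a mat set)"
  using bij_betw_finite[OF bij_betw_carrier_mat_PiE[of m n, where 'a = 'a]] assms
  by (simp add: finite_PiE)

lemma card_carrier_mat:
  assumes "finite (UNIV :: 'a set)"
  shows "card (carrier_mat m n :: 'a mat set) = card (UNIV :: 'a set) ^ (m * n)"
  using bij_betw_same_card[OF bij_betw_carrier_mat_PiE[of m n, where 'a = 'a]] assms
  by (simp add: card_PiE card_cartesian_product)

lemma finite_pairs_zero_cols: "finite (pairs_zero_cols m n T)"
  by (rule finite_subset[of _ "carrier_mat m n \<times> carrier_mat m n"])
     (auto simp: pairs_zero_cols_def finite_carrier_mat)

lemma card_low_rank_pairs_le_card_elim_data:
  assumes "n + d \<le> 2 * m"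
  shows "card (low_rank_pairs m n d) \<le> real (card (elim_data n d))
    * 2 powr ((2 * real m - d) * (real n - d) + ((2 * real m + 1) * d - d * (real d - 1) / 2))"
    (is "_ \<le> _ * ?G")
proof -
  define cover where "cover = (\<lambda>((S, T), a).
    (\<lambda>(C, B). (C * elim_mat n S T a, B * elim_mat n S T a)) ` pairs_zero_cols m n T)"
  have cover: "finite (cover w) \<and> real (card (cover w)) \<le> ?G" if "w \<in> elim_data n d" for w
  proof -
    obtain S T a where w: "w = ((S, T), a)"
      by (metis prod.exhaust)
    have "real (card (cover w)) \<le> card (pairs_zero_cols m n T)"
      by (simp add: w cover_def card_image_le finite_pairs_zero_cols)
    also have "\<dots> \<le> ?G"
      using that assms by (intro card_pairs_zero_cols_le) (auto simp: w elim_data_def)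
    finally show ?thesis
      by (simp add: w cover_def finite_pairs_zero_cols)
  qed
  have "card (low_rank_pairs m n d) \<le> card (\<Union>(cover ` elim_data n d))"
    using low_rank_pairs_subset[of m n d] cover finite_elim_data
    by (intro card_mono) (simp_all add: cover_def)
  also have "\<dots> \<le> (\<Sum>w\<in>elim_data n d. card (cover w))"
    by (rule card_UN_le[OF finite_elim_data])
  finally have "real (card (low_rank_pairs m n d)) \<le> (\<Sum>w\<in>elim_data n d. real (card (cover w)))"
    by (simp flip: of_nat_sum)
  also have "\<dots> \<le> real (card (elim_data n d)) * ?G"
    using cover sum_bounded_above[of "elim_data n d" "\<lambda>w. real (card (cover w))" ?G] by simp
  finally show ?thesis .
qed

lemma card_low_rank_pairs_le:
  assumes "d \<le> n" and "n + d \<le> 2 * m"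
  shows "card (low_rank_pairs m n d) \<le> 2 powr (2 * real m * n + 2 * real n + 3 / 2 * d - real d ^ 2 / 2)"
proof -
  let ?G = "2 powr ((2 * real m - d) * (real n - d) + ((2 * real m + 1) * d - d * (real d - 1) / 2))"
  have "real (card (elim_data n d)) \<le> real ((2 :: nat) ^ (2 * n + (n - d) * d))"
    using card_elim_data_le[of n d] by (simp only: of_nat_le_iff)
  also have "\<dots> = 2 powr real (2 * n + (n - d) * d)"
    by (subst powr_realpow) simp_all
  finally have "real (card (elim_data n d)) * ?G \<le> 2 powr real (2 * n + (n - d) * d) * ?G"
    by (rule mult_right_mono) simp
  with card_low_rank_pairs_le_card_elim_data[OF assms(2)]
  have "card (low_rank_pairs m n d) \<le> 2 powr real (2 * n + (n - d) * d) * ?G"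
    by (rule order_trans)
  also have "\<dots> = 2 powr (real (2 * n + (n - d) * d)
      + ((2 * real m - d) * (real n - d) + ((2 * real m + 1) * d - d * (real d - 1) / 2)))"
    by (simp add: powr_add)
  also have "real (2 * n + (n - d) * d)
      + ((2 * real m - d) * (real n - d) + ((2 * real m + 1) * d - d * (real d - 1) / 2))
      = 2 * real m * n + 2 * real n + 3 / 2 * d - real d ^ 2 / 2"
    using assms(1) by (simp add: of_nat_diff power2_eq_square field_simps)
  finally show ?thesis .
qed

lemma prob_low_rank_le:
  assumes "d \<le> n" and "n + d \<le> 2 * m" and "t + real d \<le> real n"
  shows "prob_low_rank m n t \<le> 2 powr (2 * real n + 3 / 2 * d - real d ^ 2 / 2)"
proof -
  let ?X = "{(C, B). C \<in> carrier_mat m n \<and> B \<in> carrier_mat m n \<and>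
     real (rank2 n (transpose_mat C * B + transpose_mat B * C)) \<le> t}"
  have "?X \<subseteq> low_rank_pairs m n d"
  proof clarify
    fix C B assume "C \<in> carrier_mat m n" and "B \<in> carrier_mat m n"
      and "real (rank2 n (transpose_mat C * B + transpose_mat B * C)) \<le> t"
    moreover from this have "real (rank2 n (symp_gram C B) + d) \<le> real n"
      using assms(3) by (simp add: symp_gram_def)
    ultimately show "(C, B) \<in> low_rank_pairs m n d"
      unfolding low_rank_pairs_def of_nat_le_iff by simp
  qed
  moreover have "finite (low_rank_pairs m n d)"
    by (rule finite_subset[of _ "carrier_mat m n \<times> carrier_mat m n"])
       (auto simp: low_rank_pairs_def finite_carrier_mat)
  ultimately have "real (card ?X) \<le> card (low_rank_pairs m n d)"
    unfolding of_nat_le_iff by (rule card_mono[rotated])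
  also have "\<dots> \<le> 2 powr (2 * real m * n + 2 * real n + 3 / 2 * d - real d ^ 2 / 2)"
    by (rule card_low_rank_pairs_le[OF assms(1,2)])
  finally have "prob_low_rank m n t \<le> 2 powr (2 * real m * n + 2 * real n + 3 / 2 * d - real d ^ 2 / 2)
      / real (card (carrier_mat m n :: bit mat set)) ^ 2"
    unfolding prob_low_rank_def by (rule divide_right_mono) (rule zero_le_power2)
  also have "real (card (carrier_mat m n :: bit mat set)) ^ 2 = real (2 ^ (2 * (m * n)))"
    by (simp add: card_carrier_mat card_UNIV_bit power_mult[symmetric] mult_ac)
  also have "\<dots> = 2 powr (2 * real m * n)"
    by (simp add: powr_realpow[symmetric] mult.assoc)
  also have "2 powr (2 * real m * n + 2 * real n + 3 / 2 * d - real d ^ 2 / 2) / 2 powr (2 * real m * n)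
      = 2 powr (2 * real n + 3 / 2 * d - real d ^ 2 / 2)"
    by (simp add: powr_diff[symmetric] add_diff_eq)
  finally show ?thesis .
qed

lemma quadratic_exponent_le:
  fixes e d n :: real
  assumes "e * n / 2 \<le> d" and "d \<le> n" and "56 \<le> e ^ 2 * n" and "0 \<le> e"
  shows "2 * n + 3 / 2 * d - d ^ 2 / 2 \<le> - (e ^ 2 / 16) * n ^ 2"
proof -
  have n: "0 \<le> n"
    using assms(3) by (smt (verit) mult_nonneg_nonpos zero_le_power2)
  have "(e * n / 2) ^ 2 \<le> d ^ 2"
    using assms(1,4) n by (intro power_mono) simp_all
  then have "e ^ 2 * n ^ 2 / 4 \<le> d ^ 2"
    by (simp add: power_mult_distrib power_divide)
  moreover have "56 * n \<le> e ^ 2 * n ^ 2"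
    using mult_right_mono[OF assms(3) n] by (simp add: power2_eq_square mult.assoc)
  ultimately show ?thesis
    using assms(2) by linarith
qed

lemma prob_low_rank_le_exp_neg_square:
  fixes e \<epsilon> \<alpha> :: real
  assumes e: "0 < e" "e \<le> \<epsilon>" "e \<le> \<alpha> - 1/2" and "\<alpha> < 1"
    and en: "2 \<le> e * n" "56 \<le> e ^ 2 * n" and "\<alpha> * n \<le> m"
  shows "prob_low_rank m n ((1 - \<epsilon>) * n) \<le> 2 powr (- (e ^ 2 / 16) * real n ^ 2)"
proof -
  define d where "d = nat \<lfloor>e * n\<rfloor>"
  have d: "real d \<le> e * n" "e * n / 2 \<le> real d"
    using en e(1) by (simp_all add: d_def) linarith
  have "e * n \<le> \<epsilon> * n" and "e * n \<le> (\<alpha> - 1/2) * n" and "1/2 * n \<le> \<alpha> * n"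
    using e by (intro mult_right_mono; simp)+
  moreover have "\<alpha> * n \<le> n"
    using e \<open>\<alpha> < 1\<close> by (intro mult_left_le_one_le) simp_all
  ultimately have "d \<le> n" and "n + d \<le> 2 * m" and "(1 - \<epsilon>) * n + d \<le> n"
    using d(1) \<open>\<alpha> * n \<le> m\<close> by (simp_all add: algebra_simps flip: of_nat_le_iff)
  then have "prob_low_rank m n ((1 - \<epsilon>) * n) \<le> 2 powr (2 * real n + 3 / 2 * d - real d ^ 2 / 2)"
    by (intro prob_low_rank_le)
  also have "\<dots> \<le> 2 powr (- (e ^ 2 / 16) * real n ^ 2)"
    using quadratic_exponent_le[OF d(2) _ en(2)] \<open>d \<le> n\<close> e(1) by simp
  finally show ?thesis .
qed

theorem lemmaD7:
  fixes \<epsilon> \<alpha> :: real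
  assumes "\<epsilon> > 0" and "1/2 < \<alpha>" and "\<alpha> < 1"
  shows "\<exists>\<delta>>0. \<exists>N. \<forall>n\<ge>N. \<forall>m. \<alpha> * real n \<le> real m \<and> m \<le> n \<longrightarrow>
           prob_low_rank m n ((1 - \<epsilon>) * real n) \<le> 2 powr (- \<delta> * real n ^ 2)"
proof -
  define e where "e = min \<epsilon> (\<alpha> - 1/2)"
  have e: "0 < e" "e \<le> \<epsilon>" "e \<le> \<alpha> - 1/2"
    using assms by (auto simp: e_def)
  obtain N :: nat where N: "2 / e \<le> N" "56 / e ^ 2 \<le> N"
    using real_arch_simple[of "max (2 / e) (56 / e ^ 2)"] by auto
  have "prob_low_rank m n ((1 - \<epsilon>) * n) \<le> 2 powr (- (e ^ 2 / 16) * real n ^ 2)"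
    if "N \<le> n" and "\<alpha> * n \<le> m" for n m :: nat
  proof -
    have "2 / e \<le> n" and "56 / e ^ 2 \<le> n"
      using N \<open>N \<le> n\<close> by (meson of_nat_le_iff order_trans)+
    then have "2 \<le> e * n" and "56 \<le> e ^ 2 * n"
      using e(1) by (simp_all add: field_simps)
    then show ?thesis
      using prob_low_rank_le_exp_neg_square[OF e assms(3)] \<open>\<alpha> * n \<le> m\<close> by blast
  qed
  then show ?thesis
    using e(1) by (intro exI[of _ "e ^ 2 / 16"]) auto
qed

end
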